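(* Let $X',X''$ be a disjoint cover of an index set $X$, $\Pi:=\Pi X$, $\Pi':=\Pi X'$, $\Pi'':=\Pi X''$, and let $\preceq\subseteq(\Pi\times\Pi)\cup(\Pi'\times\Pi')\cup(\Pi''\times\Pi'')$ be a (generalized) Hamming relation with associated $\mu$. For $\Sigma\subseteq\Pi$ let $\Sigma':=\Sigma\upharpoonright X'$ and $\Sigma'':=\Sigma\upharpoonright X''$. (1) If $\preceq$ is smooth, then for every $\Sigma\subseteq\Pi$ (not necessarily of the form $\Sigma'\times\Sigma''$): if $\mu(\Sigma')\times\mu(\Sigma'')\subseteq\Sigma$ then $\mu(\Sigma)=\mu(\Sigma')\times\mu(\Sigma'')$. (2) For every $\Sigma\subseteq\Pi$ with $\Sigma=\Sigma'\times\Sigma''$ we have $\mu(\Sigma)=\mu(\Sigma')\times\mu(\Sigma'')$ (condition ($\mu$*1)); consequently, for the size notion "$B\subseteq A$ is big iff $\mu(A)\subseteq B\subseteq A$", condition (S*1) holds: for $\Sigma'\subseteq\Pi'$, $\Sigma''\subseteq\Pi''$, $\Delta\subseteq\Sigma'\times\Sigma''$, $\Delta$ is big in $\Sigma'\times\Sigma''$ iff there is $\Gamma'\times\Gamma''\subseteq\Delta$ with $\Gamma'$ big in $\Sigma'$ and $\Gamma''$ big in $\Sigma''$.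
   Context: $\Pi X$ is the product of the value sets over the indices in $X$. Elements $\sigma\in\Pi$ are written $\sigma=\sigma'\circ\sigma''$ (concatenation) with $\sigma'=\sigma\upharpoonright X'$, $\sigma''=\sigma\upharpoonright X''$. $\preceq$ is a (generalized) Hamming relation iff $\preceq$ is reflexive and for all $\sigma,\tau\in\Pi$: $\sigma\preceq\tau\iff(\sigma'\preceq\tau'$ and $\sigma''\preceq\tau'')$. $x\prec y$ means $x\preceq y$ and $x\neq y$. For a set $A$ (subset of $\Pi$, $\Pi'$ or $\Pi''$), $\mu(A):=\{x\in A:\neg\exists x'\in A.\,x'\prec x\}$. $\preceq$ is smooth iff for every such $A$ and every $x\in A-\mu(A)$ there is $x'\in\mu(A)$ with $x'\prec x$. *)

theory Defs
  imports "HOL-Library.FuncSet"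
begin

text \<open>Elements of the product \<Pi>X of value sets V i (i \<in> X) are modelled as
  extensional functions, i.e. elements of PiE X V.  A single relation R on
  functions represents \<preceq> on \<Pi> \<union> \<Pi>' \<union> \<Pi>''.\<close>

definition proj :: "'i set \<Rightarrow> ('i \<Rightarrow> 'v) set \<Rightarrow> ('i \<Rightarrow> 'v) set" where
  "proj Y S = (\<lambda>\<sigma>. restrict \<sigma> Y) ` S"

definition concat :: "'i set \<Rightarrow> ('i \<Rightarrow> 'v) \<Rightarrow> ('i \<Rightarrow> 'v) \<Rightarrow> ('i \<Rightarrow> 'v)" where
  "concat X1 a b = (\<lambda>i. if i \<in> X1 then a i else b i)"

definition cprod :: "'i set \<Rightarrow> ('i \<Rightarrow> 'v) set \<Rightarrow> ('i \<Rightarrow> 'v) set \<Rightarrow> ('i \<Rightarrow> 'v) set" where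
  "cprod X1 A B = {concat X1 a b | a b. a \<in> A \<and> b \<in> B}"

definition mu :: "('a \<Rightarrow> 'a \<Rightarrow> bool) \<Rightarrow> 'a set \<Rightarrow> 'a set" where
  "mu R A = {x \<in> A. \<not> (\<exists>x' \<in> A. R x' x \<and> x' \<noteq> x)}"

definition hamming ::
  "(('i \<Rightarrow> 'v) \<Rightarrow> ('i \<Rightarrow> 'v) \<Rightarrow> bool) \<Rightarrow> ('i \<Rightarrow> 'v set) \<Rightarrow> 'i set \<Rightarrow> 'i set \<Rightarrow> 'i set \<Rightarrow> bool" where
  "hamming R V X X1 X2 \<longleftrightarrow>
     (\<forall>x \<in> PiE X V \<union> PiE X1 V \<union> PiE X2 V. R x x) \<and>
     (\<forall>\<sigma> \<in> PiE X V. \<forall>\<tau> \<in> PiE X V.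
        R \<sigma> \<tau> \<longleftrightarrow> (R (restrict \<sigma> X1) (restrict \<tau> X1) \<and> R (restrict \<sigma> X2) (restrict \<tau> X2)))"

definition smooth ::
  "(('i \<Rightarrow> 'v) \<Rightarrow> ('i \<Rightarrow> 'v) \<Rightarrow> bool) \<Rightarrow> ('i \<Rightarrow> 'v set) \<Rightarrow> 'i set \<Rightarrow> 'i set \<Rightarrow> 'i set \<Rightarrow> bool" where
  "smooth R V X X1 X2 \<longleftrightarrow>
     (\<forall>A. (A \<subseteq> PiE X V \<or> A \<subseteq> PiE X1 V \<or> A \<subseteq> PiE X2 V) \<longrightarrow>
        (\<forall>x \<in> A - mu R A. \<exists>x' \<in> mu R A. R x' x \<and> x' \<noteq> x))"

definition big :: "('a \<Rightarrow> 'a \<Rightarrow> bool) \<Rightarrow> 'a set \<Rightarrow> 'a set \<Rightarrow> bool" where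
  "big R B A \<longleftrightarrow> mu R A \<subseteq> B \<and> B \<subseteq> A"

end

theory Submission
  imports Defs
begin

text \<open>By the Hamming condition, \<open>R\<close> on \<open>\<Pi>\<close> is the componentwise product of \<open>R\<close> on
  \<open>\<Pi>'\<close> and \<open>\<Pi>''\<close>, so an element of a product set is minimal iff both components are
  minimal. For an arbitrary \<open>\<Sigma>\<close>, smoothness lets one move a minimal \<open>\<sigma> \<in> \<Sigma>\<close>
  down in each component to some \<open>\<tau> \<in> \<mu>(\<Sigma>') \<times> \<mu>(\<Sigma>'')\<close>; this \<open>\<tau>\<close> lies in \<open>\<Sigma>\<close> by
  hypothesis and is below \<open>\<sigma>\<close>, hence equals \<open>\<sigma>\<close>.\<close>

lemma muI: "x \<in> A \<Longrightarrow> (\<And>y. y \<in> A \<Longrightarrow> R y x \<Longrightarrow> y = x) \<Longrightarrow> x \<in> mu R A"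
  unfolding mu_def by blast

lemma mu_subset: "mu R A \<subseteq> A"
  unfolding mu_def by blast

lemma mu_memD: "x \<in> mu R A \<Longrightarrow> x \<in> A"
  unfolding mu_def by blast

lemma mu_minimalD: "x \<in> mu R A \<Longrightarrow> y \<in> A \<Longrightarrow> R y x \<Longrightarrow> y = x"
  unfolding mu_def by blast

lemma cprod_mono: "A \<subseteq> A' \<Longrightarrow> B \<subseteq> B' \<Longrightarrow> cprod X1 A B \<subseteq> cprod X1 A' B'"
  unfolding cprod_def by blast

lemma proj_subset_PiE: "Y \<subseteq> X \<Longrightarrow> S \<subseteq> PiE X V \<Longrightarrow> proj Y S \<subseteq> PiE Y V"
  unfolding proj_def by (force simp: PiE_def Pi_def extensional_def)

lemma restrict_in_proj: "\<sigma> \<in> S \<Longrightarrow> restrict \<sigma> Y \<in> proj Y S"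
  unfolding proj_def by blast

lemma restrict_concat_left: "a \<in> PiE X1 V \<Longrightarrow> restrict (concat X1 a b) X1 = a"
  unfolding concat_def PiE_def extensional_def restrict_def by auto

lemma restrict_concat_right:
  "X1 \<inter> X2 = {} \<Longrightarrow> b \<in> PiE X2 V \<Longrightarrow> restrict (concat X1 a b) X2 = b"
  unfolding concat_def PiE_def extensional_def restrict_def by (auto simp: fun_eq_iff)

lemma concat_restrict: "X1 \<union> X2 = X \<Longrightarrow> \<sigma> \<in> PiE X V \<Longrightarrow>
    concat X1 (restrict \<sigma> X1) (restrict \<sigma> X2) = \<sigma>"
  unfolding concat_def PiE_def extensional_def restrict_def by (auto simp: fun_eq_iff)

locale hamming_split =
  fixes R :: "('i \<Rightarrow> 'v) \<Rightarrow> ('i \<Rightarrow> 'v) \<Rightarrow> bool"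
    and V :: "'i \<Rightarrow> 'v set" and X X1 X2 :: "'i set"
  assumes cover: "X1 \<union> X2 = X" and disjoint: "X1 \<inter> X2 = {}"
    and hamming: "hamming R V X X1 X2"
begin

lemma R_refl: "x \<in> PiE X V \<union> PiE X1 V \<union> PiE X2 V \<Longrightarrow> R x x"
  using hamming unfolding hamming_def by blast

lemma R_iff_restrict: "\<sigma> \<in> PiE X V \<Longrightarrow> \<tau> \<in> PiE X V \<Longrightarrow>
    R \<sigma> \<tau> \<longleftrightarrow> R (restrict \<sigma> X1) (restrict \<tau> X1) \<and> R (restrict \<sigma> X2) (restrict \<tau> X2)"
  using hamming unfolding hamming_def by blast

lemma concat_in_PiE: "a \<in> PiE X1 V \<Longrightarrow> b \<in> PiE X2 V \<Longrightarrow> concat X1 a b \<in> PiE X V"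
  using cover disjoint unfolding concat_def PiE_def Pi_def extensional_def by auto

lemma X1_subset: "X1 \<subseteq> X" and X2_subset: "X2 \<subseteq> X"
  using cover by blast+

lemma restrict_left_in_PiE: "\<sigma> \<in> PiE X V \<Longrightarrow> restrict \<sigma> X1 \<in> PiE X1 V"
  using cover by auto

lemma restrict_right_in_PiE: "\<sigma> \<in> PiE X V \<Longrightarrow> restrict \<sigma> X2 \<in> PiE X2 V"
  using cover by auto

lemma concat_eq_iff:
  assumes "a \<in> PiE X1 V" "a' \<in> PiE X1 V" "b \<in> PiE X2 V" "b' \<in> PiE X2 V"
  shows "concat X1 a b = concat X1 a' b' \<longleftrightarrow> a = a' \<and> b = b'"
  using assms restrict_concat_left restrict_concat_right[OF disjoint] by metis

lemma R_concat_iff: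
  assumes "a \<in> PiE X1 V" "a' \<in> PiE X1 V" "b \<in> PiE X2 V" "b' \<in> PiE X2 V"
  shows "R (concat X1 a b) (concat X1 a' b') \<longleftrightarrow> R a a' \<and> R b b'"
  using assms R_iff_restrict[OF concat_in_PiE concat_in_PiE]
  by (simp add: restrict_concat_left restrict_concat_right[OF disjoint])

lemma mu_cprod:
  assumes A: "A \<subseteq> PiE X1 V" and B: "B \<subseteq> PiE X2 V"
  shows "mu R (cprod X1 A B) = cprod X1 (mu R A) (mu R B)"
proof (intro equalityI subsetI)
  fix s assume s: "s \<in> mu R (cprod X1 A B)"
  then have "s \<in> cprod X1 A B" by (rule mu_memD)
  then obtain a b where ab: "s = concat X1 a b" "a \<in> A" "b \<in> B"
    unfolding cprod_def by blast
  have aP: "a \<in> PiE X1 V" and bP: "b \<in> PiE X2 V" using ab A B by blast+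
  have "a \<in> mu R A"
  proof (rule muI)
    fix a' assume a': "a' \<in> A" "R a' a"
    have a'P: "a' \<in> PiE X1 V" using a' A by blast
    have "concat X1 a' b \<in> cprod X1 A B" using a' ab unfolding cprod_def by blast
    moreover have "R (concat X1 a' b) s"
      using R_concat_iff[OF a'P aP bP bP] a'(2) R_refl bP ab(1) by blast
    ultimately have "concat X1 a' b = s" using s by (rule mu_minimalD[rotated])
    then show "a' = a" using concat_eq_iff[OF a'P aP bP bP] ab(1) by blast
  qed fact
  moreover have "b \<in> mu R B"
  proof (rule muI)
    fix b' assume b': "b' \<in> B" "R b' b"
    have b'P: "b' \<in> PiE X2 V" using b' B by blast
    have "concat X1 a b' \<in> cprod X1 A B" using b' ab unfolding cprod_def by blast
    moreover have "R (concat X1 a b') s"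
      using R_concat_iff[OF aP aP b'P bP] b'(2) R_refl aP ab(1) by blast
    ultimately have "concat X1 a b' = s" using s by (rule mu_minimalD[rotated])
    then show "b' = b" using concat_eq_iff[OF aP aP b'P bP] ab(1) by blast
  qed fact
  ultimately show "s \<in> cprod X1 (mu R A) (mu R B)"
    using ab unfolding cprod_def by blast
next
  fix s assume "s \<in> cprod X1 (mu R A) (mu R B)"
  then obtain a b where ab: "s = concat X1 a b" "a \<in> mu R A" "b \<in> mu R B"
    unfolding cprod_def by blast
  have aP: "a \<in> PiE X1 V" and bP: "b \<in> PiE X2 V"
    using A B mu_memD[OF ab(2)] mu_memD[OF ab(3)] by blast+
  show "s \<in> mu R (cprod X1 A B)"
  proof (rule muI)
    show "s \<in> cprod X1 A B"
      using ab(1) mu_memD[OF ab(2)] mu_memD[OF ab(3)] unfolding cprod_def by blast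
  next
    fix t assume "t \<in> cprod X1 A B" "R t s"
    then obtain a' b' where t: "t = concat X1 a' b'" "a' \<in> A" "b' \<in> B"
      unfolding cprod_def by blast
    have a'P: "a' \<in> PiE X1 V" and b'P: "b' \<in> PiE X2 V" using t A B by blast+
    have "R a' a" "R b' b"
      using R_concat_iff[OF a'P aP b'P bP] \<open>R t s\<close> t(1) ab(1) by simp_all
    then have "a' = a" "b' = b"
      using mu_minimalD[OF ab(2) t(2)] mu_minimalD[OF ab(3) t(3)] by blast+
    then show "t = s" using t(1) ab(1) by simp
  qed
qed

lemma smooth_mu_below:
  assumes smooth: "smooth R V X X1 X2" and A: "A \<subseteq> PiE X1 V \<or> A \<subseteq> PiE X2 V"
    and x: "x \<in> A"
  obtains x' where "x' \<in> mu R A" "R x' x"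
proof (cases "x \<in> mu R A")
  case True
  have "R x x" using A x by (intro R_refl) blast
  with True show ?thesis by (rule that)
next
  case False
  then have "x \<in> A - mu R A" using x by blast
  then obtain x' where "x' \<in> mu R A" "R x' x"
    using smooth A unfolding smooth_def by meson
  then show ?thesis by (rule that)
qed

lemma inter_cprod_mu_proj_subset_mu:
  assumes S: "S \<subseteq> PiE X V"
  shows "S \<inter> cprod X1 (mu R (proj X1 S)) (mu R (proj X2 S)) \<subseteq> mu R S"
proof
  fix s assume "s \<in> S \<inter> cprod X1 (mu R (proj X1 S)) (mu R (proj X2 S))"
  then obtain a b where s: "s \<in> S" "s = concat X1 a b"
    and a: "a \<in> mu R (proj X1 S)" and b: "b \<in> mu R (proj X2 S)"
    unfolding cprod_def by blast
  have sP: "s \<in> PiE X V" using S s(1) by blast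
  have aP: "a \<in> PiE X1 V" and bP: "b \<in> PiE X2 V"
    using proj_subset_PiE[OF X1_subset S] proj_subset_PiE[OF X2_subset S] mu_memD[OF a] mu_memD[OF b]
    by blast+
  have "restrict s X1 = a" "restrict s X2 = b"
    using s(2) restrict_concat_left[OF aP] restrict_concat_right[OF disjoint bP] by simp_all
  show "s \<in> mu R S"
  proof (rule muI)
    fix t assume t: "t \<in> S" "R t s"
    have tP: "t \<in> PiE X V" using S t(1) by blast
    have "R (restrict t X1) a" "R (restrict t X2) b"
      using R_iff_restrict[OF tP sP] t(2) \<open>restrict s X1 = a\<close> \<open>restrict s X2 = b\<close> by simp_all
    then have "restrict t X1 = a" "restrict t X2 = b"
      using mu_minimalD[OF a restrict_in_proj[OF t(1)]] mu_minimalD[OF b restrict_in_proj[OF t(1)]]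
      by blast+
    then show "t = s" using concat_restrict[OF cover tP] s(2) by simp
  qed (fact s(1))
qed

lemma mu_subset_cprod_mu_proj_if_smooth:
  assumes smooth: "smooth R V X X1 X2" and S: "S \<subseteq> PiE X V"
    and sub: "cprod X1 (mu R (proj X1 S)) (mu R (proj X2 S)) \<subseteq> S"
  shows "mu R S \<subseteq> cprod X1 (mu R (proj X1 S)) (mu R (proj X2 S))"
proof
  fix s assume s: "s \<in> mu R S"
  have sS: "s \<in> S" using s by (rule mu_memD)
  have sP: "s \<in> PiE X V" using S sS by blast
  have S1: "proj X1 S \<subseteq> PiE X1 V" and S2: "proj X2 S \<subseteq> PiE X2 V"
    using proj_subset_PiE[OF X1_subset S] proj_subset_PiE[OF X2_subset S] .
  obtain a0 where a0: "a0 \<in> mu R (proj X1 S)" "R a0 (restrict s X1)"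
    using smooth_mu_below[OF smooth _ restrict_in_proj[OF sS]] S1 by blast
  obtain b0 where b0: "b0 \<in> mu R (proj X2 S)" "R b0 (restrict s X2)"
    using smooth_mu_below[OF smooth _ restrict_in_proj[OF sS]] S2 by blast
  have a0P: "a0 \<in> PiE X1 V" and b0P: "b0 \<in> PiE X2 V"
    using S1 S2 mu_memD[OF a0(1)] mu_memD[OF b0(1)] by blast+
  note s_split = concat_restrict[OF cover sP, symmetric]
  note R_concat = R_concat_iff[OF a0P restrict_left_in_PiE[OF sP] b0P restrict_right_in_PiE[OF sP]]
  note concat_eq = concat_eq_iff[OF a0P restrict_left_in_PiE[OF sP] b0P restrict_right_in_PiE[OF sP]]
  have "concat X1 a0 b0 \<in> S" using sub a0(1) b0(1) unfolding cprod_def by blast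
  moreover have "R (concat X1 a0 b0) s" using R_concat a0(2) b0(2) s_split by simp
  ultimately have "concat X1 a0 b0 = s" using s by (rule mu_minimalD[rotated])
  then have "a0 = restrict s X1" "b0 = restrict s X2" using concat_eq s_split by simp_all
  then show "s \<in> cprod X1 (mu R (proj X1 S)) (mu R (proj X2 S))"
    using a0(1) b0(1) s_split unfolding cprod_def by blast
qed

lemma mu_eq_cprod_mu_proj_if_smooth:
  assumes "smooth R V X X1 X2" "S \<subseteq> PiE X V"
    and "cprod X1 (mu R (proj X1 S)) (mu R (proj X2 S)) \<subseteq> S"
  shows "mu R S = cprod X1 (mu R (proj X1 S)) (mu R (proj X2 S))"
proof
  show "mu R S \<subseteq> cprod X1 (mu R (proj X1 S)) (mu R (proj X2 S))"
    using assms by (rule mu_subset_cprod_mu_proj_if_smooth)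
  show "cprod X1 (mu R (proj X1 S)) (mu R (proj X2 S)) \<subseteq> mu R S"
    using inter_cprod_mu_proj_subset_mu[OF assms(2)] assms(3) by blast
qed

lemma mu_eq_cprod_mu_proj_if_product:
  assumes S: "S \<subseteq> PiE X V" and product: "S = cprod X1 (proj X1 S) (proj X2 S)"
  shows "mu R S = cprod X1 (mu R (proj X1 S)) (mu R (proj X2 S))"
proof -
  have "mu R S = mu R (cprod X1 (proj X1 S) (proj X2 S))"
    using product by (rule arg_cong)
  also have "\<dots> = cprod X1 (mu R (proj X1 S)) (mu R (proj X2 S))"
    using mu_cprod[OF proj_subset_PiE[OF X1_subset S] proj_subset_PiE[OF X2_subset S]] .
  finally show ?thesis .
qed

lemma big_cprod_iff:
  assumes A: "A \<subseteq> PiE X1 V" and B: "B \<subseteq> PiE X2 V" and D: "D \<subseteq> cprod X1 A B"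
  shows "big R D (cprod X1 A B) \<longleftrightarrow>
           (\<exists>G1 G2. cprod X1 G1 G2 \<subseteq> D \<and> big R G1 A \<and> big R G2 B)"
proof
  assume "big R D (cprod X1 A B)"
  then have "cprod X1 (mu R A) (mu R B) \<subseteq> D"
    using mu_cprod[OF A B] unfolding big_def by simp
  moreover have "big R (mu R A) A" "big R (mu R B) B"
    unfolding big_def by (simp_all add: mu_subset)
  ultimately show "\<exists>G1 G2. cprod X1 G1 G2 \<subseteq> D \<and> big R G1 A \<and> big R G2 B" by blast
next
  assume "\<exists>G1 G2. cprod X1 G1 G2 \<subseteq> D \<and> big R G1 A \<and> big R G2 B"
  then obtain G1 G2 where G: "cprod X1 G1 G2 \<subseteq> D" "mu R A \<subseteq> G1" "mu R B \<subseteq> G2"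
    unfolding big_def by blast
  have "mu R (cprod X1 A B) \<subseteq> D"
    using mu_cprod[OF A B] order_trans[OF cprod_mono[OF G(2,3)] G(1)] by simp
  then show "big R D (cprod X1 A B)" using D unfolding big_def by blast
qed

end

theorem fact4p9:
  fixes R :: "('i \<Rightarrow> 'v) \<Rightarrow> ('i \<Rightarrow> 'v) \<Rightarrow> bool"
    and V :: "'i \<Rightarrow> 'v set" and X X1 X2 :: "'i set"
  assumes cover: "X1 \<union> X2 = X" "X1 \<inter> X2 = {}"
    and dom: "\<And>x y. R x y \<Longrightarrow> (x \<in> PiE X V \<and> y \<in> PiE X V) \<or> (x \<in> PiE X1 V \<and> y \<in> PiE X1 V)
                                  \<or> (x \<in> PiE X2 V \<and> y \<in> PiE X2 V)"
    and ham: "hamming R V X X1 X2"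
  shows "(smooth R V X X1 X2 \<longrightarrow>
            (\<forall>\<Sigma> \<subseteq> PiE X V.
               cprod X1 (mu R (proj X1 \<Sigma>)) (mu R (proj X2 \<Sigma>)) \<subseteq> \<Sigma> \<longrightarrow>
               mu R \<Sigma> = cprod X1 (mu R (proj X1 \<Sigma>)) (mu R (proj X2 \<Sigma>))))
       \<and> (\<forall>\<Sigma> \<subseteq> PiE X V. \<Sigma> = cprod X1 (proj X1 \<Sigma>) (proj X2 \<Sigma>) \<longrightarrow>
               mu R \<Sigma> = cprod X1 (mu R (proj X1 \<Sigma>)) (mu R (proj X2 \<Sigma>)))
       \<and> (\<forall>\<Sigma>1 \<subseteq> PiE X1 V. \<forall>\<Sigma>2 \<subseteq> PiE X2 V. \<forall>\<Delta> \<subseteq> cprod X1 \<Sigma>1 \<Sigma>2.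
               big R \<Delta> (cprod X1 \<Sigma>1 \<Sigma>2) \<longleftrightarrow>
               (\<exists>\<Gamma>1 \<Gamma>2. cprod X1 \<Gamma>1 \<Gamma>2 \<subseteq> \<Delta> \<and> big R \<Gamma>1 \<Sigma>1 \<and> big R \<Gamma>2 \<Sigma>2))"
proof -
  interpret hamming_split R V X X1 X2
    using cover ham by unfold_locales
  show ?thesis
  proof (intro conjI impI allI)
    fix \<Sigma> assume "smooth R V X X1 X2" "\<Sigma> \<subseteq> PiE X V"
      "cprod X1 (mu R (proj X1 \<Sigma>)) (mu R (proj X2 \<Sigma>)) \<subseteq> \<Sigma>"
    then show "mu R \<Sigma> = cprod X1 (mu R (proj X1 \<Sigma>)) (mu R (proj X2 \<Sigma>))"
      by (rule mu_eq_cprod_mu_proj_if_smooth)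
  next
    fix \<Sigma> assume "\<Sigma> \<subseteq> PiE X V" "\<Sigma> = cprod X1 (proj X1 \<Sigma>) (proj X2 \<Sigma>)"
    then show "mu R \<Sigma> = cprod X1 (mu R (proj X1 \<Sigma>)) (mu R (proj X2 \<Sigma>))"
      by (rule mu_eq_cprod_mu_proj_if_product)
  next
    fix \<Sigma>1 \<Sigma>2 \<Delta> assume "\<Sigma>1 \<subseteq> PiE X1 V" "\<Sigma>2 \<subseteq> PiE X2 V" "\<Delta> \<subseteq> cprod X1 \<Sigma>1 \<Sigma>2"
    then show "big R \<Delta> (cprod X1 \<Sigma>1 \<Sigma>2) \<longleftrightarrow>
        (\<exists>\<Gamma>1 \<Gamma>2. cprod X1 \<Gamma>1 \<Gamma>2 \<subseteq> \<Delta> \<and> big R \<Gamma>1 \<Sigma>1 \<and> big R \<Gamma>2 \<Sigma>2)"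
      by (rule big_cprod_iff)
  qed
qed

end
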